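(* Let $X$ be a random variable whose support is contained in the bounded interval $(l,r)$, with $l,r$ finite. Then: (i) for all $\gamma\ge1$ such that $(\gamma,0)\in D_X$ and $(0,\gamma)\in D_X$, $$\left[(r-l)^{1/\gamma}-[H_X(\gamma)]^{1/\gamma}\right]^\gamma\le K_X(\gamma)\le\left[(r-l)^{1/\gamma}+[H_X(\gamma)]^{1/\gamma}\right]^\gamma,$$ $$\left[(r-l)^{1/\gamma}-[K_X(\gamma)]^{1/\gamma}\right]^\gamma\le H_X(\gamma)\le\left[(r-l)^{1/\gamma}+[K_X(\gamma)]^{1/\gamma}\right]^\gamma;$$ (ii) for all $\gamma\ge1$ such that $(0,\gamma)\in D_X$, $$G_X(\gamma,\gamma)\le\left[[K_X(\gamma)]^{1/\gamma}+[K_X(2\gamma)]^{1/\gamma}\right]^\gamma;$$ (iii) for all $\gamma\ge1$ such that $(\gamma,0)\in D_X$, $$G_X(\gamma,\gamma)\le\left[[H_X(\gamma)]^{1/\gamma}+[H_X(2\gamma)]^{1/\gamma}\right]^\gamma.$$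
   Context: For a random variable $X$ with CDF $F$ and survival function $\overline F=1-F$, with $l=\inf\{x:F(x)>0\}$, $r=\sup\{x:\overline F(x)>0\}$, the CIGF is $G_X(\alpha,\beta)=\int_l^r [F(x)]^\alpha[\overline F(x)]^\beta\,dx$ on $D_X=\{(\alpha,\beta)\in\mathbb{R}^2: G_X(\alpha,\beta)<\infty\}$; $H_X(\alpha)=G_X(\alpha,0)=\int_l^r[F(x)]^\alpha dx$ and $K_X(\beta)=G_X(0,\beta)=\int_l^r[\overline F(x)]^\beta dx$. *)

theory Defs
  imports "HOL-Probability.Probability"
begin

text \<open>A random variable X is represented by its distribution M (a real_distribution);
  its CDF is cdf M and its survival function is 1 - cdf M.\<close>

definition supp_left :: "real measure \<Rightarrow> real" where
  "supp_left M = Inf {x. 0 < cdf M x}"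

definition supp_right :: "real measure \<Rightarrow> real" where
  "supp_right M = Sup {x. 0 < 1 - cdf M x}"

text \<open>Integrand of the CIGF. On the open interval (l,r) both F and 1-F are strictly
  positive, so powr is the usual real power there; endpoints are Lebesgue-null.\<close>
definition cigf_integrand :: "real measure \<Rightarrow> real \<Rightarrow> real \<Rightarrow> real \<Rightarrow> real" where
  "cigf_integrand M a b x = (cdf M x) powr a * (1 - cdf M x) powr b"

definition CIGF :: "real measure \<Rightarrow> real \<Rightarrow> real \<Rightarrow> real" where
  "CIGF M a b = (LINT x : {supp_left M<..<supp_right M} | lborel. cigf_integrand M a b x)"

definition CIGF_dom :: "real measure \<Rightarrow> (real \<times> real) set" where
  "CIGF_dom M = {(a, b). set_integrable lborel {supp_left M<..<supp_right M} (cigf_integrand M a b)}"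

definition CIGF_H :: "real measure \<Rightarrow> real \<Rightarrow> real" where
  "CIGF_H M a = CIGF M a 0"

definition CIGF_K :: "real measure \<Rightarrow> real \<Rightarrow> real" where
  "CIGF_K M b = CIGF M 0 b"

end

theory Submission
  imports Defs
begin

(* On the support (l, r) both F and 1 - F lie in (0, 1), so every CIGF with nonnegative
   exponents is at most G(0,0) = r - l.  For the same reason G(\<gamma>,\<gamma>) is at most both H(\<gamma>) and
   K(\<gamma>), which gives (ii) and (iii).  Since F + (1 - F) = 1, Minkowski's inequality in
   L^\<gamma>(l, r) yields (r - l)^(1/\<gamma>) \<le> H(\<gamma>)^(1/\<gamma>) + K(\<gamma>)^(1/\<gamma>), and (i) follows from this
   together with 0 \<le> H(\<gamma>), K(\<gamma>) \<le> r - l. *)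

(* Convexity of x powr p at the weights a/(a+b), b/(a+b); taking for a, b the L^p norms of
   two functions and integrating gives Minkowski's inequality. *)
lemma powr_add_le_weighted:
  fixes f g a b p :: real
  assumes f: "0 < f" and g: "0 < g" and a: "0 < a" and b: "0 < b" and p: "1 \<le> p"
  shows "(f + g) powr p \<le> (a + b) powr (p - 1) * (f powr p / a powr (p - 1) + g powr p / b powr (p - 1))"
proof -
  define t where "t = b / (a + b)"
  have t: "0 < t" "t < 1" "1 - t = a / (a + b)" using a b by (auto simp: t_def field_simps)
  have split: "f + g = (1 - t) *\<^sub>R (f / (1 - t)) + t *\<^sub>R (g / t)" using t(1,2) by simp
  have scale: "s * (h / s) powr p = (a + b) powr (p - 1) * (h powr p / c powr (p - 1))"
    if "s = c / (a + b)" "0 < c" "0 < h" for s c h :: real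
  proof -
    have s: "0 < s" using that a b by simp
    have "s powr p = s powr (p - 1) * s" using s by (simp add: powr_diff)
    then have "s * (h / s) powr p = h powr p / s powr (p - 1)"
      using s that(3) by (simp add: powr_divide)
    also have "\<dots> = (a + b) powr (p - 1) * (h powr p / c powr (p - 1))"
      using that a b by (simp add: powr_divide)
    finally show ?thesis .
  qed
  have "(f + g) powr p \<le> (1 - t) * (f / (1 - t)) powr p + t * (g / t) powr p"
    unfolding split using convex_onD[OF powr_convex[OF p], of t "f / (1 - t)" "g / t"] t(1,2) f g by simp
  also have "\<dots> = (a + b) powr (p - 1) * (f powr p / a powr (p - 1) + g powr p / b powr (p - 1))"
    using scale[OF t(3) a f] scale[OF t_def b g] by (simp add: distrib_left)
  finally show ?thesis .
qed

lemma set_integral_pos: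
  fixes f :: "'a \<Rightarrow> real"
  assumes int: "set_integrable M A f" and A: "A \<in> sets M" "A \<notin> null_sets M"
    and pos: "\<forall>x\<in>A. 0 < f x"
  shows "0 < (LINT x:A|M. f x)"
proof -
  have "0 \<le> (LINT x:A|M. f x)"
    using set_integral_mono[OF _ int, of "\<lambda>_. 0"] pos by (simp add: set_integrable_def less_imp_le)
  moreover have "(LINT x:A|M. f x) \<noteq> 0"
  proof
    assume zero: "(LINT x:A|M. f x) = 0"
    have "integrable M (\<lambda>x. indicator A x * f x)"
      using int by (simp add: set_integrable_def)
    moreover have "(LINT x:A|M. indicator A x * f x) = 0"
      using zero A(1) by (subst set_lebesgue_integral_cong) auto
    ultimately have "A \<in> null_sets M"
      using A(1) pos by (intro null_if_pos_func_has_zero_int) auto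
    with A(2) show False ..
  qed
  ultimately show ?thesis by simp
qed

lemma set_integral_powr_Minkowski:
  fixes f g :: "'a \<Rightarrow> real"
  assumes p: "1 \<le> p" and pos: "\<forall>x\<in>A. 0 < f x" "\<forall>x\<in>A. 0 < g x"
    and int: "set_integrable M A (\<lambda>x. f x powr p)" "set_integrable M A (\<lambda>x. g x powr p)"
      "set_integrable M A (\<lambda>x. (f x + g x) powr p)"
    and I: "0 < (LINT x:A|M. f x powr p)" and J: "0 < (LINT x:A|M. g x powr p)"
  shows "(LINT x:A|M. (f x + g x) powr p) powr (1/p)
    \<le> (LINT x:A|M. f x powr p) powr (1/p) + (LINT x:A|M. g x powr p) powr (1/p)"
proof -
  define a where "a = (LINT x:A|M. f x powr p) powr (1/p)"
  define b where "b = (LINT x:A|M. g x powr p) powr (1/p)"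
  have a: "0 < a" "a powr p = (LINT x:A|M. f x powr p)" using I p by (auto simp: a_def powr_powr)
  have b: "0 < b" "b powr p = (LINT x:A|M. g x powr p)" using J p by (auto simp: b_def powr_powr)
  have cancel: "c powr p / c powr (p - 1) = c" if "0 < c" for c :: real
    using that by (simp add: powr_diff)
  have "(LINT x:A|M. (f x + g x) powr p)
      \<le> (LINT x:A|M. (a + b) powr (p - 1) * (f x powr p / a powr (p - 1) + g x powr p / b powr (p - 1)))"
    using int pos a b p by (intro set_integral_mono powr_add_le_weighted) auto
  also have "\<dots> = (a + b) powr (p - 1) * (a powr p / a powr (p - 1) + b powr p / b powr (p - 1))"
    using int by (simp add: a b set_integral_add)
  also have "\<dots> = (a + b) powr (p - 1) * (a + b)"
    using a(1) b(1) by (simp add: cancel)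
  also have "\<dots> = (a + b) powr p"
    using a(1) b(1) by (simp add: powr_diff)
  finally have "(LINT x:A|M. (f x + g x) powr p) powr (1/p) \<le> ((a + b) powr p) powr (1/p)"
    using p set_integral_mono[OF _ int(3), of "\<lambda>_. 0"]
    by (intro powr_mono2) (auto simp: set_integrable_def)
  also have "\<dots> = a + b" using a b p by (simp add: powr_powr)
  finally show ?thesis unfolding a_def b_def .
qed

lemma powr_root_diff_le:
  fixes D X Y p :: real
  assumes "0 < p" "0 \<le> X" "X \<le> D" "0 \<le> Y"
    and "D powr (1/p) \<le> X powr (1/p) + Y powr (1/p)"
  shows "(D powr (1/p) - X powr (1/p)) powr p \<le> Y"
proof -
  have "X powr (1/p) \<le> D powr (1/p)" using assms by (intro powr_mono2) auto
  then have "(D powr (1/p) - X powr (1/p)) powr p \<le> (Y powr (1/p)) powr p"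
    using assms by (intro powr_mono2) auto
  also have "\<dots> = Y" using assms by (simp add: powr_powr)
  finally show ?thesis .
qed

lemma le_powr_root_add:
  fixes D E Y p :: real
  assumes "0 < p" "0 \<le> Y" "Y \<le> D"
  shows "Y \<le> (D powr (1/p) + E powr (1/p)) powr p"
proof -
  have "Y \<le> (D powr (1/p)) powr p" using assms by (simp add: powr_powr)
  also have "\<dots> \<le> (D powr (1/p) + E powr (1/p)) powr p" using assms by (intro powr_mono2) auto
  finally show ?thesis .
qed

locale bounded_support_distribution = real_distribution M for M :: "real measure" +
  assumes bdd_below_cdf_pos: "bdd_below {x. 0 < cdf M x}"
    and bdd_above_cdf_lt_1: "bdd_above {x. 0 < 1 - cdf M x}"
begin

lemma supp_left_le_supp_right: "supp_left M \<le> supp_right M"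
proof (rule ccontr)
  assume "\<not> supp_left M \<le> supp_right M"
  then obtain x where x: "supp_right M < x" "x < supp_left M"
    using dense[of "supp_right M" "supp_left M"] by auto
  have "\<not> 0 < cdf M x"
  proof
    assume "0 < cdf M x"
    then have "supp_left M \<le> x"
      unfolding supp_left_def by (intro cInf_lower bdd_below_cdf_pos) simp
    with x(2) show False by simp
  qed
  moreover have "\<not> 0 < 1 - cdf M x"
  proof
    assume "0 < 1 - cdf M x"
    then have "x \<le> supp_right M"
      unfolding supp_right_def by (intro cSup_upper bdd_above_cdf_lt_1) simp
    with x(1) show False by simp
  qed
  ultimately show False by simp
qed

lemma cdf_strict_bounds_on_support:
  assumes "x \<in> {supp_left M<..<supp_right M}"
  shows "0 < cdf M x" and "cdf M x < 1"
proof -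
  have "\<forall>\<^sub>F y in at_top. 0 < cdf M y"
    using order_tendstoD(1)[OF cdf_lim_at_top_prob] by simp
  then have "{y. 0 < cdf M y} \<noteq> {}" by (auto simp: eventually_at_top_linorder)
  then obtain y where y: "0 < cdf M y" "y < x"
    using assms cInf_less_iff[OF _ bdd_below_cdf_pos, of x] unfolding supp_left_def by auto
  have "\<forall>\<^sub>F z in at_bot. cdf M z < 1"
    using order_tendstoD(2)[OF cdf_lim_at_bot] by simp
  then have "{z. 0 < 1 - cdf M z} \<noteq> {}" by (auto simp: eventually_at_bot_linorder)
  then obtain z where z: "0 < 1 - cdf M z" "x < z"
    using assms less_cSup_iff[OF _ bdd_above_cdf_lt_1, of x] unfolding supp_right_def by auto
  show "0 < cdf M x" using y cdf_nondecreasing[of y x] by simp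
  show "cdf M x < 1" using z cdf_nondecreasing[of x z] by simp
qed

lemma borel_measurable_cigf_integrand: "cigf_integrand M a b \<in> borel_measurable lborel"
proof -
  have "mono (cdf M)" using cdf_nondecreasing by (auto simp: mono_def)
  then have [measurable]: "cdf M \<in> borel_measurable borel" by (rule borel_measurable_mono)
  show ?thesis unfolding cigf_integrand_def by measurable
qed

lemma cigf_integrand_pos:
  "x \<in> {supp_left M<..<supp_right M} \<Longrightarrow> 0 < cigf_integrand M a b x"
  using cdf_strict_bounds_on_support[of x] by (simp add: cigf_integrand_def)

lemma cigf_integrand_antimono:
  assumes "x \<in> {supp_left M<..<supp_right M}" "a \<le> a'" "b \<le> b'"
  shows "cigf_integrand M a' b' x \<le> cigf_integrand M a b x"
  using cdf_strict_bounds_on_support[OF assms(1)] assms(2,3)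
  unfolding cigf_integrand_def by (intro mult_mono powr_mono') auto

lemma cigf_integrand_0_0:
  "x \<in> {supp_left M<..<supp_right M} \<Longrightarrow> cigf_integrand M 0 0 x = 1"
  using cdf_strict_bounds_on_support[of x] by (simp add: cigf_integrand_def)

lemma set_integrable_cigf_integrand:
  assumes "0 \<le> a" "0 \<le> b"
  shows "set_integrable lborel {supp_left M<..<supp_right M} (cigf_integrand M a b)"
proof (rule set_integrable_bound)
  show "set_integrable lborel {supp_left M<..<supp_right M} (\<lambda>_. 1::real)"
    using supp_left_le_supp_right by (simp add: set_integrable_def)
  show "set_borel_measurable lborel {supp_left M<..<supp_right M} (cigf_integrand M a b)"
    unfolding set_borel_measurable_def using borel_measurable_cigf_integrand by measurable
  show "AE x in lborel. x \<in> {supp_left M<..<supp_right M} \<longrightarrow>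
      norm (cigf_integrand M a b x) \<le> norm (1::real)"
  proof (intro AE_I2 impI)
    fix x assume x: "x \<in> {supp_left M<..<supp_right M}"
    have "cigf_integrand M a b x \<le> cigf_integrand M 0 0 x"
      using x assms by (intro cigf_integrand_antimono)
    then show "norm (cigf_integrand M a b x) \<le> norm (1::real)"
      using cigf_integrand_pos[OF x, of a b] cigf_integrand_0_0[OF x] by simp
  qed
qed

lemma CIGF_0_0: "CIGF M 0 0 = supp_right M - supp_left M"
proof -
  have "CIGF M 0 0 = (LINT x:{supp_left M<..<supp_right M}|lborel. 1)"
    unfolding CIGF_def using cigf_integrand_0_0 by (intro set_lebesgue_integral_cong) auto
  then show ?thesis using supp_left_le_supp_right by (simp add: set_integral_const)
qed

lemma CIGF_antimono:
  assumes "0 \<le> a" "a \<le> a'" "0 \<le> b" "b \<le> b'"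
  shows "CIGF M a' b' \<le> CIGF M a b"
  unfolding CIGF_def using assms
  by (intro set_integral_mono set_integrable_cigf_integrand cigf_integrand_antimono) auto

lemma CIGF_nonneg:
  assumes "0 \<le> a" "0 \<le> b"
  shows "0 \<le> CIGF M a b"
proof -
  have "(LINT x:{supp_left M<..<supp_right M}|lborel. 0) \<le> CIGF M a b"
    unfolding CIGF_def using assms cigf_integrand_pos
    by (intro set_integral_mono set_integrable_cigf_integrand)
      (auto simp: set_integrable_def less_imp_le)
  then show ?thesis by simp
qed

lemma CIGF_pos:
  assumes "supp_left M < supp_right M" "0 \<le> a" "0 \<le> b"
  shows "0 < CIGF M a b"
  unfolding CIGF_def using assms cigf_integrand_pos
  by (intro set_integral_pos set_integrable_cigf_integrand) (auto simp: null_sets_def)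

lemma supp_length_powr_le_CIGF_H_K:
  assumes \<gamma>: "1 \<le> \<gamma>"
  shows "(supp_right M - supp_left M) powr (1/\<gamma>) \<le> CIGF_H M \<gamma> powr (1/\<gamma>) + CIGF_K M \<gamma> powr (1/\<gamma>)"
proof (cases "supp_left M < supp_right M")
  case False
  then show ?thesis using supp_left_le_supp_right by simp
next
  case True
  let ?S = "{supp_left M<..<supp_right M}"
  have on_S: "cigf_integrand M \<gamma> 0 x = cdf M x powr \<gamma>"
    "cigf_integrand M 0 \<gamma> x = (1 - cdf M x) powr \<gamma>"
    "cigf_integrand M 0 0 x = (cdf M x + (1 - cdf M x)) powr \<gamma>" if "x \<in> ?S" for x
    using cdf_strict_bounds_on_support[OF that] by (simp_all add: cigf_integrand_def)
  have transfer: "set_integrable lborel ?S g"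
    if "set_integrable lborel ?S f" "\<And>x. x \<in> ?S \<Longrightarrow> f x = g x" for f g :: "real \<Rightarrow> real"
    using that set_integrable_cong[of lborel lborel ?S ?S f g] by simp
  have int: "set_integrable lborel ?S (\<lambda>x. cdf M x powr \<gamma>)"
    "set_integrable lborel ?S (\<lambda>x. (1 - cdf M x) powr \<gamma>)"
    "set_integrable lborel ?S (\<lambda>x. (cdf M x + (1 - cdf M x)) powr \<gamma>)"
    by (rule transfer[OF set_integrable_cigf_integrand on_S(1)]
        transfer[OF set_integrable_cigf_integrand on_S(2)]
        transfer[OF set_integrable_cigf_integrand on_S(3)]; use \<gamma> in simp)+
  have eq: "supp_right M - supp_left M = (LINT x:?S|lborel. (cdf M x + (1 - cdf M x)) powr \<gamma>)"
    "CIGF_H M \<gamma> = (LINT x:?S|lborel. cdf M x powr \<gamma>)"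
    "CIGF_K M \<gamma> = (LINT x:?S|lborel. (1 - cdf M x) powr \<gamma>)"
    unfolding CIGF_0_0[symmetric] CIGF_H_def CIGF_K_def CIGF_def
    by (auto simp: on_S intro: set_lebesgue_integral_cong)
  have pos: "0 < CIGF_H M \<gamma>" "0 < CIGF_K M \<gamma>"
    using CIGF_pos[OF True] \<gamma> by (simp_all add: CIGF_H_def CIGF_K_def)
  show ?thesis
    unfolding eq using \<gamma> cdf_strict_bounds_on_support int pos[unfolded eq]
    by (intro set_integral_powr_Minkowski) auto
qed

end

theorem proposition6:
  fixes M :: "real measure"
  assumes "real_distribution M"
    and "bdd_below {x. 0 < cdf M x}"
    and "bdd_above {x. 0 < 1 - cdf M x}"
  defines "l \<equiv> supp_left M" and "r \<equiv> supp_right M"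
  shows
    "(\<forall>\<gamma>::real. 1 \<le> \<gamma> \<longrightarrow> (\<gamma>, 0) \<in> CIGF_dom M \<longrightarrow> (0, \<gamma>) \<in> CIGF_dom M \<longrightarrow>
        ((r - l) powr (1/\<gamma>) - CIGF_H M \<gamma> powr (1/\<gamma>)) powr \<gamma> \<le> CIGF_K M \<gamma> \<and>
        CIGF_K M \<gamma> \<le> ((r - l) powr (1/\<gamma>) + CIGF_H M \<gamma> powr (1/\<gamma>)) powr \<gamma> \<and>
        ((r - l) powr (1/\<gamma>) - CIGF_K M \<gamma> powr (1/\<gamma>)) powr \<gamma> \<le> CIGF_H M \<gamma> \<and>
        CIGF_H M \<gamma> \<le> ((r - l) powr (1/\<gamma>) + CIGF_K M \<gamma> powr (1/\<gamma>)) powr \<gamma>)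
   \<and> (\<forall>\<gamma>::real. 1 \<le> \<gamma> \<longrightarrow> (0, \<gamma>) \<in> CIGF_dom M \<longrightarrow>
        CIGF M \<gamma> \<gamma> \<le> (CIGF_K M \<gamma> powr (1/\<gamma>) + CIGF_K M (2*\<gamma>) powr (1/\<gamma>)) powr \<gamma>)
   \<and> (\<forall>\<gamma>::real. 1 \<le> \<gamma> \<longrightarrow> (\<gamma>, 0) \<in> CIGF_dom M \<longrightarrow>
        CIGF M \<gamma> \<gamma> \<le> (CIGF_H M \<gamma> powr (1/\<gamma>) + CIGF_H M (2*\<gamma>) powr (1/\<gamma>)) powr \<gamma>)"
proof -
  interpret bounded_support_distribution M
    using assms(1-3) by (simp add: bounded_support_distribution_def bounded_support_distribution_axioms_def)
  have H: "0 \<le> CIGF_H M \<gamma>" "CIGF_H M \<gamma> \<le> r - l" if "0 \<le> \<gamma>" for \<gamma>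
    using that CIGF_nonneg CIGF_antimono[of 0 \<gamma> 0 0] unfolding CIGF_H_def CIGF_0_0 l_def r_def by auto
  have K: "0 \<le> CIGF_K M \<gamma>" "CIGF_K M \<gamma> \<le> r - l" if "0 \<le> \<gamma>" for \<gamma>
    using that CIGF_nonneg CIGF_antimono[of 0 0 0 \<gamma>] unfolding CIGF_K_def CIGF_0_0 l_def r_def by auto
  have G: "CIGF M \<gamma> \<gamma> \<le> CIGF_K M \<gamma>" "CIGF M \<gamma> \<gamma> \<le> CIGF_H M \<gamma>" if "0 \<le> \<gamma>" for \<gamma>
    using that CIGF_antimono[of 0 \<gamma> \<gamma> \<gamma>] CIGF_antimono[of \<gamma> \<gamma> 0 \<gamma>]
    unfolding CIGF_H_def CIGF_K_def by auto
  have G_nonneg: "0 \<le> CIGF M \<gamma> \<gamma>" if "0 \<le> \<gamma>" for \<gamma>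
    using CIGF_nonneg[OF that that] .
  have Minkowski: "(r - l) powr (1/\<gamma>) \<le> CIGF_H M \<gamma> powr (1/\<gamma>) + CIGF_K M \<gamma> powr (1/\<gamma>)"
    "(r - l) powr (1/\<gamma>) \<le> CIGF_K M \<gamma> powr (1/\<gamma>) + CIGF_H M \<gamma> powr (1/\<gamma>)"
    if "1 \<le> \<gamma>" for \<gamma>
    using supp_length_powr_le_CIGF_H_K[OF that] unfolding l_def r_def by simp_all
  show ?thesis
    using H K G G_nonneg Minkowski
    by (intro conjI allI impI) (auto intro!: powr_root_diff_le le_powr_root_add)
qed

end
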